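(* Fix integers $m\ge d\ge1$, $\lambda=d/m$, and $\sigma>0$. Let $p_1,p_2,\dots$ be monic polynomials of degree $d$, $p_i(x)=\prod_{j=1}^d(x-r_{i,j}^2)$ with $r_{i,j}$ real, such that $\frac1d\sum_j r_{i,j}^2\le\sigma^2$ for all $i$. For $N\ge1$ let $P_N=p_1\boxplus_{d,\lambda}\cdots\boxplus_{d,\lambda}p_N$ and let $\widetilde P_N$ be the monic polynomial of degree $2d$ whose roots are the roots of $\mathbb{S}P_N$ multiplied by $1/N$. Then $\widetilde P_N\to x^{2d}$ (coefficientwise) as $N\to\infty$.
   Context: $(p\boxplus_{d,\lambda}q)(x)=\sum_{k=0}^dx^{d-k}(-1)^k\sum_{i+j=k}\frac{(d-i)!(d-j)!}{d!(d-k)!}\frac{(m-i)!(m-j)!}{m!(m-k)!}a_ib_j$ for $p=\sum(-1)^ia_ix^{d-i}$, $q=\sum(-1)^ib_ix^{d-i}$; this operation is associative, bilinear and preserves monic polynomials with nonnegative real roots. $\mathbb{S}P(x)=P(x^2)$. *)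

theory Defs
  imports "HOL-Computational_Algebra.Polynomial" Complex_Main
begin

text \<open>Rectangular finite free convolution of degree d with parameter lambda = d/m.
  Writing p = sum (-1)^i a_i x^(d-i), i.e. a_i = (-1)^i coeff p (d-i).\<close>
definition rect_conv :: "nat \<Rightarrow> nat \<Rightarrow> real poly \<Rightarrow> real poly \<Rightarrow> real poly" where
  "rect_conv d m p q =
     (\<Sum>k\<le>d. monom ((-1)^k *
        (\<Sum>i\<le>k. (fact (d-i) * fact (d-(k-i)) / (fact d * fact (d-k))) *
                  (fact (m-i) * fact (m-(k-i)) / (fact m * fact (m-k))) *
                  (((-1)^i * coeff p (d-i)) * ((-1)^(k-i) * coeff q (d-(k-i)))))) (d-k))"

text \<open>P_N = p_1 boxplus ... boxplus p_N (left-bracketed; the operation is associative).\<close>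
fun rect_conv_iter :: "nat \<Rightarrow> nat \<Rightarrow> (nat \<Rightarrow> real poly) \<Rightarrow> nat \<Rightarrow> real poly" where
  "rect_conv_iter d m p 0 = p 1"
| "rect_conv_iter d m p (Suc 0) = p 1"
| "rect_conv_iter d m p (Suc (Suc n)) = rect_conv d m (rect_conv_iter d m p (Suc n)) (p (Suc (Suc n)))"

definition sym_poly :: "real poly \<Rightarrow> real poly" where
  "sym_poly P = pcompose P [:0, 0, 1:]"

text \<open>Monic polynomial of degree deg Q whose roots are those of the monic Q scaled by 1/N:
  N^(-deg Q) * Q(N x).\<close>
definition root_scale :: "nat \<Rightarrow> real poly \<Rightarrow> real poly" where
  "root_scale N Q = smult (1 / real N ^ degree Q) (pcompose Q [:0, real N:])"

end

theory Submission
  imports Defs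
begin

text \<open>Write \<open>p = \<Sum>(-1)^i a\<^sub>i x^(d-i)\<close>. For \<open>p = \<Prod>(x - s\<^sub>j)\<close> with \<open>s\<^sub>j = r\<^sub>j\<^sup>2 \<ge> 0\<close>
  the \<open>a\<^sub>i\<close> are the elementary symmetric functions of the \<open>s\<^sub>j\<close>, so \<open>a\<^sub>0 = 1\<close> and
  \<open>0 \<le> a\<^sub>i \<le> \<Prod>(1 + s\<^sub>j) \<le> exp (d \<sigma>\<^sup>2) = B\<close>. All weights of the convolution lie in
  \<open>[0, 1]\<close>, so by induction and the hockey-stick identity
  \<open>0 \<le> a\<^sub>k(P\<^sub>N) \<le> B^k (N-1+k choose k) \<le> B^k N^k\<close>. The coefficient of \<open>x^(2d-2k)\<close> in the
  rescaled \<open>S P\<^sub>N\<close> is \<open>\<plusminus>a\<^sub>k(P\<^sub>N) / N^(2k)\<close>, which therefore tends to 0 for \<open>k \<ge> 1\<close>,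
  while the leading coefficient stays 1 and the odd coefficients vanish.\<close>

text \<open>The coefficient \<open>a\<^sub>i\<close> of the paper; only meaningful for \<open>i \<le> d\<close>, as \<open>d - i\<close> truncates.\<close>

definition signed_coeff :: "nat \<Rightarrow> real poly \<Rightarrow> nat \<Rightarrow> real" where
  "signed_coeff d q i = (-1)^i * coeff q (d - i)"

definition rect_weight :: "nat \<Rightarrow> nat \<Rightarrow> nat \<Rightarrow> nat \<Rightarrow> real" where
  "rect_weight d m i k =
     (fact (d-i) * fact (d-(k-i)) / (fact d * fact (d-k))) *
     (fact (m-i) * fact (m-(k-i)) / (fact m * fact (m-k)))"

lemma coeff_rect_conv:
  "coeff (rect_conv d m p q) n =
     (if n \<le> d then (-1)^(d-n) *
        (\<Sum>i\<le>d-n. rect_weight d m i (d-n) * signed_coeff d p i * signed_coeff d q (d-n-i))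
      else 0)"
proof -
  have "coeff (rect_conv d m p q) n =
      (\<Sum>k\<le>d. if k = d - n \<and> n \<le> d then (-1)^k *
        (\<Sum>i\<le>k. rect_weight d m i k * signed_coeff d p i * signed_coeff d q (k-i)) else 0)"
    unfolding rect_conv_def coeff_sum coeff_monom rect_weight_def signed_coeff_def
    by (intro sum.cong refl) (auto simp: mult_ac)
  then show ?thesis
    by simp
qed

lemma signed_coeff_rect_conv:
  assumes "k \<le> d"
  shows "signed_coeff d (rect_conv d m p q) k =
           (\<Sum>i\<le>k. rect_weight d m i k * signed_coeff d p i * signed_coeff d q (k-i))"
  using assms by (simp add: signed_coeff_def coeff_rect_conv flip: mult.assoc power_add)

lemma degree_rect_conv_le: "degree (rect_conv d m p q) \<le> d"
  by (rule degree_le) (simp add: coeff_rect_conv)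

lemma coeff_rect_conv_top: "coeff (rect_conv d m p q) d = coeff p d * coeff q d"
  by (simp add: coeff_rect_conv rect_weight_def signed_coeff_def)

lemma rect_conv_monic:
  assumes "degree p = d" "coeff p d = 1" "degree q = d" "coeff q d = 1"
  shows "degree (rect_conv d m p q) = d \<and> coeff (rect_conv d m p q) d = 1"
proof -
  have "coeff (rect_conv d m p q) d = 1"
    using assms by (simp add: coeff_rect_conv_top)
  moreover from this have "degree (rect_conv d m p q) = d"
    by (intro antisym degree_rect_conv_le le_degree) simp
  ultimately show ?thesis by simp
qed

lemma rect_conv_iter_monic:
  assumes "\<And>n. n \<ge> 1 \<Longrightarrow> degree (p n) = d" "\<And>n. n \<ge> 1 \<Longrightarrow> coeff (p n) d = 1"
  shows "degree (rect_conv_iter d m p N) = d \<and> coeff (rect_conv_iter d m p N) d = 1"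
proof -
  have "degree (rect_conv_iter d m p (Suc n)) = d \<and> coeff (rect_conv_iter d m p (Suc n)) d = 1" for n
    by (induction n) (simp_all add: assms rect_conv_monic)
  then show ?thesis
    by (cases N) (simp_all add: assms)
qed

lemma fact_mult_fact_diff_le:
  assumes "i \<le> a" "a \<le> b"
  shows "fact a * fact (b - i) \<le> (fact b * fact (a - i) :: nat)"
  using assms(2)
proof (induction b rule: dec_induct)
  case base
  then show ?case by simp
next
  case (step b)
  have "fact a * fact (Suc b - i) = fact a * fact (b - i) * Suc (b - i)"
    using assms step by (simp add: Suc_diff_le algebra_simps)
  also have "\<dots> \<le> fact b * fact (a - i) * Suc b"
    using step.IH by (rule mult_le_mono) simp
  also have "\<dots> = fact (Suc b) * fact (a - i)"
    by (simp add: algebra_simps)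
  finally show ?case .
qed

lemma fact_ratio_le_1:
  assumes "i \<le> k" "k \<le> n"
  shows "fact (n-i) * fact (n-(k-i)) / (fact n * fact (n-k)) \<le> (1::real)"
proof -
  have "fact (n-(k-i)) * fact (n-i) \<le> (fact n * fact (n-k) :: nat)"
    using fact_mult_fact_diff_le[of i "n-(k-i)" n] assms by (simp add: diff_diff_right)
  then have "real (fact (n-i) * fact (n-(k-i))) \<le> real (fact n * fact (n-k))"
    by (simp only: mult.commute of_nat_le_iff)
  then show ?thesis by simp
qed

lemma rect_weight_nonneg: "0 \<le> rect_weight d m i k"
  by (simp add: rect_weight_def)

lemma rect_weight_le_1:
  assumes "i \<le> k" "k \<le> d" "d \<le> m"
  shows "rect_weight d m i k \<le> 1"
  unfolding rect_weight_def
  using mult_mono[OF fact_ratio_le_1[of i k d] fact_ratio_le_1[of i k m]] assms by simp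

lemma signed_coeff_rect_conv_iter_bound:
  assumes "d \<le> m"
    and p_bound: "\<And>n i. n \<ge> 1 \<Longrightarrow> i \<le> d \<Longrightarrow> 0 \<le> signed_coeff d (p n) i \<and> signed_coeff d (p n) i \<le> B ^ i"
    and "k \<le> d"
  shows "0 \<le> signed_coeff d (rect_conv_iter d m p (Suc n)) k \<and>
         signed_coeff d (rect_conv_iter d m p (Suc n)) k \<le> B ^ k * real ((n + k) choose k)"
  using \<open>k \<le> d\<close>
proof (induction n arbitrary: k)
  case 0
  then show ?case using p_bound[of 1 k] by simp
next
  case (Suc n)
  let ?P = "rect_conv_iter d m p (Suc n)" and ?q = "p (Suc (Suc n))"
  let ?term = "\<lambda>i. rect_weight d m i k * signed_coeff d ?P i * signed_coeff d ?q (k - i)"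
  have term_bounds: "0 \<le> ?term i \<and> ?term i \<le> B ^ k * real ((n + i) choose i)" if "i \<le> k" for i
  proof -
    have P: "0 \<le> signed_coeff d ?P i" "signed_coeff d ?P i \<le> B ^ i * real ((n + i) choose i)"
      using Suc.IH[of i] that Suc.prems by auto
    have q: "0 \<le> signed_coeff d ?q (k - i)" "signed_coeff d ?q (k - i) \<le> B ^ (k - i)"
      using p_bound[of "Suc (Suc n)" "k - i"] Suc.prems by auto
    have w: "0 \<le> rect_weight d m i k" "rect_weight d m i k \<le> 1"
      using rect_weight_nonneg rect_weight_le_1[of i k d m] that Suc.prems assms(1) by auto
    have "?term i \<le> 1 * (B ^ i * real ((n + i) choose i)) * B ^ (k - i)"
      using P q w by (intro mult_mono) auto
    also have "\<dots> = B ^ k * real ((n + i) choose i)"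
      using that by (simp add: power_add [symmetric])
    finally show ?thesis using P q w by simp
  qed
  have "signed_coeff d (rect_conv_iter d m p (Suc (Suc n))) k = (\<Sum>i\<le>k. ?term i)"
    using Suc.prems by (simp add: signed_coeff_rect_conv)
  moreover have "(\<Sum>i\<le>k. ?term i) \<le> (\<Sum>i\<le>k. B ^ k * real ((n + i) choose i))"
    using term_bounds by (intro sum_mono) auto
  moreover have "(\<Sum>i\<le>k. B ^ k * real ((n + i) choose i)) = B ^ k * real ((Suc n + k) choose k)"
    by (simp add: sum_choose_lower flip: sum_distrib_left of_nat_sum)
  moreover have "0 \<le> (\<Sum>i\<le>k. ?term i)"
    using term_bounds by (intro sum_nonneg) auto
  ultimately show ?case by simp
qed

lemma binomial_add_le_Suc_power: "(n + t) choose t \<le> Suc n ^ t"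
proof (induction t)
  case (Suc t)
  have "Suc t * ((n + Suc t) choose Suc t) = Suc (n + t) * ((n + t) choose t)"
    using Suc_times_binomial[of t "n + t"] by simp
  also have "\<dots> \<le> Suc t * Suc n * Suc n ^ t"
    using Suc.IH by (intro mult_le_mono) auto
  also have "\<dots> = Suc t * Suc n ^ Suc t"
    by (simp only: power_Suc mult.assoc)
  finally show ?case
    by (simp only: mult_le_cancel1)
qed simp

lemma coeff_mult_nonneg:
  fixes p q :: "'a::linordered_semidom poly"
  assumes "\<And>i. 0 \<le> coeff p i" "\<And>i. 0 \<le> coeff q i"
  shows "0 \<le> coeff (p * q) n"
  using assms by (simp add: coeff_mult sum_nonneg)

lemma coeff_prod_nonneg:
  fixes f :: "'b \<Rightarrow> 'a::linordered_semidom poly"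
  assumes "\<And>j i. j \<in> A \<Longrightarrow> 0 \<le> coeff (f j) i"
  shows "0 \<le> coeff (\<Prod>j\<in>A. f j) n"
  using assms
proof (induction A arbitrary: n rule: infinite_finite_induct)
  case (insert j A)
  then show ?case by (simp add: coeff_mult_nonneg)
qed (simp_all add: coeff_1)

lemma coeff_le_poly_one:
  fixes p :: "'a::linordered_semidom poly"
  assumes "\<And>i. 0 \<le> coeff p i"
  shows "coeff p n \<le> poly p 1"
proof (cases "n \<le> degree p")
  case True
  then show ?thesis
    unfolding poly_altdef power_one mult_1_right using assms by (intro member_le_sum) auto
next
  case False
  then show ?thesis
    unfolding poly_altdef using assms by (simp add: coeff_eq_0 sum_nonneg)
qed

lemma monic_prod_linear:
  fixes c :: "'b \<Rightarrow> 'a::idom"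
  assumes "finite A"
  shows "degree (\<Prod>j\<in>A. [:c j, 1:]) = card A \<and> coeff (\<Prod>j\<in>A. [:c j, 1:]) (card A) = 1"
proof -
  have "degree (\<Prod>j\<in>A. [:c j, 1:]) = card A"
    by (simp add: degree_prod_eq_sum_degree)
  moreover have "lead_coeff (\<Prod>j\<in>A. [:c j, 1:]) = 1"
    by (simp add: lead_coeff_prod)
  ultimately show ?thesis by simp
qed

lemma coeff_prod_linear_reflect:
  fixes s :: "'b \<Rightarrow> 'a::comm_ring_1"
  shows "coeff (\<Prod>j\<in>A. [:s j, 1:]) l = (-1) ^ (card A + l) * coeff (\<Prod>j\<in>A. [:- s j, 1:]) l"
proof -
  have "pcompose (\<Prod>j\<in>A. [:- s j, 1:]) [:0, -1:] = (\<Prod>j\<in>A. smult (-1) [:s j, 1:])"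
    by (simp add: pcompose_prod pcompose_pCons)
  also have "\<dots> = smult ((-1) ^ card A) (\<Prod>j\<in>A. [:s j, 1:])"
    by (simp only: prod_smult prod_constant)
  finally have "coeff (pcompose (\<Prod>j\<in>A. [:- s j, 1:]) [:0, -1:]) l =
      coeff (smult ((-1) ^ card A) (\<Prod>j\<in>A. [:s j, 1:])) l"
    by simp
  then have "(-1) ^ l * coeff (\<Prod>j\<in>A. [:- s j, 1:]) l = (-1) ^ card A * coeff (\<Prod>j\<in>A. [:s j, 1:]) l"
    by (simp only: coeff_pcompose_linear coeff_smult)
  then have "(-1) ^ card A * ((-1) ^ l * coeff (\<Prod>j\<in>A. [:- s j, 1:]) l) = coeff (\<Prod>j\<in>A. [:s j, 1:]) l"
    by (simp flip: mult.assoc)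
  then show ?thesis
    by (simp add: power_add mult.assoc)
qed

lemma signed_coeff_prod_linear_bound:
  fixes s :: "'b \<Rightarrow> real"
  assumes "finite A" and s_nonneg: "\<And>j. j \<in> A \<Longrightarrow> 0 \<le> s j" and "sum s A \<le> c" and "i \<le> card A"
  shows "0 \<le> signed_coeff (card A) (\<Prod>j\<in>A. [:- s j, 1:]) i \<and>
         signed_coeff (card A) (\<Prod>j\<in>A. [:- s j, 1:]) i \<le> exp c ^ i"
proof (cases "i = 0")
  case True
  then show ?thesis
    using monic_prod_linear[OF \<open>finite A\<close>, of "\<lambda>j. - s j"] by (simp add: signed_coeff_def)
next
  case False
  let ?R = "\<Prod>j\<in>A. [:s j, 1:]"
  have "card A + (card A - i) = i + 2 * (card A - i)"
    using \<open>i \<le> card A\<close> by simp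
  then have "(-1::real) ^ (card A + (card A - i)) = (-1) ^ i"
    by (simp only: power_add power_mult) simp
  then have signed_coeff_eq: "signed_coeff (card A) (\<Prod>j\<in>A. [:- s j, 1:]) i = coeff ?R (card A - i)"
    using coeff_prod_linear_reflect[of s A "card A - i"] by (simp add: signed_coeff_def)
  have R_nonneg: "0 \<le> coeff ?R l" for l
    using s_nonneg by (intro coeff_prod_nonneg) (simp add: coeff_pCons split: nat.split)
  have "coeff ?R (card A - i) \<le> poly ?R 1"
    using R_nonneg by (rule coeff_le_poly_one)
  also have "\<dots> = (\<Prod>j\<in>A. 1 + s j)"
    by (simp add: poly_prod add.commute)
  also have "\<dots> \<le> (\<Prod>j\<in>A. exp (s j))"
    using s_nonneg by (intro prod_mono) auto
  also have "\<dots> = exp (sum s A)"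
    using \<open>finite A\<close> by (simp add: exp_sum)
  also have "\<dots> \<le> exp c"
    using \<open>sum s A \<le> c\<close> by simp
  also have "\<dots> \<le> exp c ^ i"
  proof -
    have "0 \<le> c"
      using \<open>sum s A \<le> c\<close> sum_nonneg[of A s, OF s_nonneg] by linarith
    then show ?thesis
      using False power_increasing[of 1 i "exp c"] by simp
  qed
  finally show ?thesis
    using signed_coeff_eq R_nonneg by simp
qed

lemma coeff_sym_poly: "coeff (sym_poly P) n = (if even n then coeff P (n div 2) else 0)"
  unfolding sym_poly_def
proof (induction P arbitrary: n)
  case (pCons a P)
  have shift: "[:0, 0, 1:] * pcompose P [:0, 0, 1:] = pCons 0 (pCons 0 (pcompose P [:0, 0, 1:]))"
    by simp
  show ?case
  proof (cases n)
    case (Suc n')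
    then show ?thesis
      using pCons.IH[of "n' - 1"]
      by (cases n') (auto simp: pcompose_pCons shift coeff_pCons split: nat.splits)
  qed (simp add: pcompose_pCons shift)
qed simp

lemma degree_sym_poly: "degree (sym_poly P) = 2 * degree P"
  by (simp add: sym_poly_def degree_pcompose)

lemma coeff_root_scale: "coeff (root_scale N P) k = real N ^ k / real N ^ degree P * coeff P k"
  by (simp add: root_scale_def coeff_pcompose_linear)

lemma tendsto_zero_div_power_if_power_bounded:
  fixes f :: "nat \<Rightarrow> real"
  assumes bound: "\<And>N. N \<ge> 1 \<Longrightarrow> \<bar>f N\<bar> \<le> c * real N ^ t" and "t \<ge> 1"
  shows "(\<lambda>N. f N / real N ^ (2 * t)) \<longlonglongrightarrow> 0"
proof (rule tendsto_0_le[OF lim_inverse_n', where K = c])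
  show "\<forall>\<^sub>F N in sequentially. norm (f N / real N ^ (2 * t)) \<le> norm (1 / real N) * c"
    using eventually_ge_at_top[of 1]
  proof eventually_elim
    case (elim N)
    have "0 \<le> c * real N ^ t"
      using bound[OF elim] abs_ge_zero[of "f N"] by linarith
    moreover have "0 < real N ^ t"
      using elim by simp
    ultimately have "0 \<le> c"
      by (simp add: zero_le_mult_iff)
    have "\<bar>f N\<bar> / real N ^ (2 * t) \<le> c * real N ^ t / real N ^ (2 * t)"
      using bound[OF elim] by (simp add: divide_right_mono)
    also have "\<dots> = c / real N ^ t"
      using elim by (simp add: mult_2 power_add)
    also have "\<dots> \<le> c / real N"
      using \<open>0 \<le> c\<close> elim \<open>t \<ge> 1\<close> by (intro divide_left_mono) (auto intro: power_increasing[of 1, simplified])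
    finally show ?case
      by (simp add: abs_divide)
  qed
qed

lemma tendsto_coeff_root_scale_sym_poly:
  fixes Q :: "nat \<Rightarrow> real poly"
  assumes monic: "\<And>N. N \<ge> 1 \<Longrightarrow> degree (Q N) = d \<and> coeff (Q N) d = 1"
    and lower: "\<And>t. 1 \<le> t \<Longrightarrow> t \<le> d \<Longrightarrow> (\<lambda>N. coeff (Q N) (d - t) / real N ^ (2 * t)) \<longlonglongrightarrow> 0"
  shows "(\<lambda>N. coeff (root_scale N (sym_poly (Q N))) k) \<longlonglongrightarrow> coeff (monom 1 (2 * d)) k"
proof -
  have coeff_eq: "coeff (root_scale N (sym_poly (Q N))) k =
      (if even k then real N ^ k / real N ^ (2 * d) * coeff (Q N) (k div 2) else 0)" if "N \<ge> 1" for N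
    using monic[OF that] by (simp add: coeff_root_scale degree_sym_poly coeff_sym_poly)
  consider (odd) "odd k" | (top) "k = 2 * d" | (high) "even k" "k > 2 * d"
    | (low) t where "1 \<le> t" "t \<le> d" "k = 2 * (d - t)"
  proof (cases "even k \<and> k < 2 * d")
    case True
    then show ?thesis
      using that(4)[of "d - k div 2"] by auto
  next
    case False
    then show ?thesis
      using that(1-3) by fastforce
  qed
  then show ?thesis
  proof cases
    case odd
    have "\<forall>\<^sub>F N in sequentially. coeff (root_scale N (sym_poly (Q N))) k = 0"
      using eventually_ge_at_top[of 1] by eventually_elim (simp add: coeff_eq odd)
    moreover have "coeff (monom 1 (2 * d)) k = (0::real)"
      using odd by auto
    ultimately show ?thesis
      by (simp add: tendsto_eventually)
  next
    case top
    have "\<forall>\<^sub>F N in sequentially. coeff (root_scale N (sym_poly (Q N))) k = 1"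
      using eventually_ge_at_top[of 1] by eventually_elim (simp add: coeff_eq, simp add: top monic)
    then show ?thesis
      using top by (simp add: tendsto_eventually)
  next
    case high
    have "\<forall>\<^sub>F N in sequentially. coeff (root_scale N (sym_poly (Q N))) k = 0"
      using eventually_ge_at_top[of 1]
      by eventually_elim (use high monic in \<open>auto simp: coeff_eq coeff_eq_0\<close>)
    moreover have "coeff (monom 1 (2 * d)) k = (0::real)"
      using high by auto
    ultimately show ?thesis
      by (simp add: tendsto_eventually)
  next
    case low
    have "\<forall>\<^sub>F N in sequentially.
        coeff (root_scale N (sym_poly (Q N))) k = coeff (Q N) (d - t) / real N ^ (2 * t)"
      using eventually_ge_at_top[of 1]
    proof eventually_elim
      case (elim N)
      have "2 * d = k + 2 * t"
        using low by simp
      then have "real N ^ k / real N ^ (2 * d) = 1 / real N ^ (2 * t)"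
        using elim by (simp add: power_add)
      then show ?case
        unfolding coeff_eq[OF elim] using low(3) by simp
    qed
    moreover have "coeff (monom 1 (2 * d)) k = (0::real)"
      using low by auto
    ultimately show ?thesis
      using lower[OF low(1,2)] by (simp add: tendsto_cong)
  qed
qed

lemma abs_coeff_rect_conv_iter_le:
  assumes "d \<le> m"
    and p_bound: "\<And>n i. n \<ge> 1 \<Longrightarrow> i \<le> d \<Longrightarrow> 0 \<le> signed_coeff d (p n) i \<and> signed_coeff d (p n) i \<le> B ^ i"
    and "t \<le> d" "N \<ge> 1"
  shows "\<bar>coeff (rect_conv_iter d m p N) (d - t)\<bar> \<le> B ^ t * real N ^ t"
proof -
  obtain n where N: "N = Suc n"
    using \<open>N \<ge> 1\<close> by (cases N) auto
  have bound: "0 \<le> signed_coeff d (rect_conv_iter d m p N) t \<and>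
      signed_coeff d (rect_conv_iter d m p N) t \<le> B ^ t * real ((n + t) choose t)"
    unfolding N using assms(1) p_bound assms(3) by (rule signed_coeff_rect_conv_iter_bound)
  have "\<bar>coeff (rect_conv_iter d m p N) (d - t)\<bar> = \<bar>signed_coeff d (rect_conv_iter d m p N) t\<bar>"
    by (simp add: signed_coeff_def abs_mult)
  also have "\<dots> \<le> B ^ t * real ((n + t) choose t)"
    using bound by simp
  also have "\<dots> \<le> B ^ t * real N ^ t"
  proof (rule mult_left_mono)
    have "real ((n + t) choose t) \<le> real (N ^ t)"
      unfolding N of_nat_le_iff by (rule binomial_add_le_Suc_power)
    then show "real ((n + t) choose t) \<le> real N ^ t"
      by simp
    show "0 \<le> B ^ t"
      using p_bound[of 1 t] \<open>t \<le> d\<close> by linarith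
  qed
  finally show ?thesis .
qed

theorem mainTheorem7:
  fixes d m :: nat and \<sigma> :: real
    and p :: "nat \<Rightarrow> real poly" and r :: "nat \<Rightarrow> nat \<Rightarrow> real"
  assumes "1 \<le> d" and "d \<le> m" and "\<sigma> > 0"
    and "\<And>i. i \<ge> 1 \<Longrightarrow> p i = (\<Prod>j=1..d. [:- ((r i j)^2), 1:])"
    and "\<And>i. i \<ge> 1 \<Longrightarrow> (1 / real d) * (\<Sum>j=1..d. (r i j)^2) \<le> \<sigma>^2"
  shows "\<forall>k. (\<lambda>N. coeff (root_scale N (sym_poly (rect_conv_iter d m p N))) k)
              \<longlonglongrightarrow> coeff (monom 1 (2*d)) k"
proof
  fix k
  define B where "B = exp (real d * \<sigma>^2)"
  have p_monic: "degree (p n) = d \<and> coeff (p n) d = 1" if "n \<ge> 1" for n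
    using monic_prod_linear[of "{1..d}" "\<lambda>j. - ((r n j)^2)"] assms(4)[OF that] by simp
  have p_bound: "0 \<le> signed_coeff d (p n) i \<and> signed_coeff d (p n) i \<le> B ^ i"
    if "n \<ge> 1" "i \<le> d" for n i
  proof -
    have "(\<Sum>j=1..d. (r n j)^2) \<le> real d * \<sigma>^2"
      using assms(1) assms(5)[OF that(1)] by (simp add: field_simps)
    then show ?thesis
      using signed_coeff_prod_linear_bound[of "{1..d}" "\<lambda>j. (r n j)^2"] assms(4)[OF that(1)] that(2)
      by (simp add: B_def)
  qed
  show "(\<lambda>N. coeff (root_scale N (sym_poly (rect_conv_iter d m p N))) k) \<longlonglongrightarrow> coeff (monom 1 (2*d)) k"
  proof (rule tendsto_coeff_root_scale_sym_poly)
    show "degree (rect_conv_iter d m p N) = d \<and> coeff (rect_conv_iter d m p N) d = 1" for N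
      using p_monic by (intro rect_conv_iter_monic) auto
    show "(\<lambda>N. coeff (rect_conv_iter d m p N) (d - t) / real N ^ (2 * t)) \<longlonglongrightarrow> 0"
      if "1 \<le> t" "t \<le> d" for t
      using abs_coeff_rect_conv_iter_le[OF assms(2) p_bound \<open>t \<le> d\<close>] \<open>1 \<le> t\<close>
      by (rule tendsto_zero_div_power_if_power_bounded)
  qed
qed

end
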